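(* Let $\mathsf G$ be a group having a non-trivial outer automorphism class $[\varphi]\in\mathsf{Out}(\mathsf G)$ such that (1) $[\varphi]^2=[id_{\mathsf G}]$ in $\mathsf{Out}(\mathsf G)$, and (2) for every automorphism $\phi\in[\varphi]$ and every $g\in\mathsf G$ with $\phi^2=c_g$, one has $\phi(g)\neq g$. Then $\mathbb{S}ym(\mathsf G)$ is not split (i.e. $\mathsf G$ is not permutationally split).
   Context: $c_g$ denotes the inner automorphism $h\mapsto ghg^{-1}$; $\mathsf{Out}(\mathsf G)=\mathsf{Aut}(\mathsf G)/\mathsf{Inn}(\mathsf G)$. $\mathsf G$ is regarded as a one-object groupoid, and $\mathbb{S}ym(\mathsf G)$ is the 2-group of self-equivalences of this groupoid and natural isomorphisms, with tensor product composition (equivalently: objects the automorphisms $\phi$ of $\mathsf G$, morphisms $\phi\to\tilde\phi$ the elements $g$ with $\tilde\phi=c_g\circ\phi$). A 2-group is split if it is equivalent (monoidal functor with pseudo-inverse up to monoidal natural isomorphism) to an elementary 2-group $\mathsf A[1]\rtimes\mathsf H[0]$ for some group $\mathsf H$ and left $\mathsf H$-module $\mathsf A$: the strict 2-group with objects the elements of $\mathsf H$, morphisms $(a,h):h\to h$, composition $(a',h)\circ(a,h)=(a'+a,h)$, tensor $h\otimes h'=hh'$, $(a,h)\otimes(a',h')=(a+h\lhd a',hh')$. $\mathsf G$ is permutationally split if $\mathbb{S}ym(\mathsf G)$ is split. *)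

theory Defs
  imports "HOL-Algebra.Algebra"
begin

text \<open>Both Sym(G) and the elementary 2-groups A[1] \<rtimes> H[0] are strict monoidal
  categories (associator and unitors are identities).  We represent such a category
  by carriers of objects and morphisms together with its structure maps.
  cmp g f denotes g \<circ> f (first f, then g).\<close>

record ('o, 'm) mcat =
  obj   :: "'o set"
  mor   :: "'m set"
  src   :: "'m \<Rightarrow> 'o"
  tgt   :: "'m \<Rightarrow> 'o"
  idm   :: "'o \<Rightarrow> 'm"
  cmp   :: "'m \<Rightarrow> 'm \<Rightarrow> 'm"
  otens :: "'o \<Rightarrow> 'o \<Rightarrow> 'o"
  mtens :: "'m \<Rightarrow> 'm \<Rightarrow> 'm"
  unit  :: "'o"

definition in_hom :: "('o, 'm) mcat \<Rightarrow> 'm \<Rightarrow> 'o \<Rightarrow> 'o \<Rightarrow> bool" where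
  "in_hom C f x y \<longleftrightarrow> f \<in> mor C \<and> src C f = x \<and> tgt C f = y"

definition iso_in :: "('o, 'm) mcat \<Rightarrow> 'm \<Rightarrow> 'o \<Rightarrow> 'o \<Rightarrow> bool" where
  "iso_in C f x y \<longleftrightarrow> in_hom C f x y \<and>
     (\<exists>g. in_hom C g y x \<and> cmp C g f = idm C x \<and> cmp C f g = idm C y)"

record ('o1, 'm1, 'o2, 'm2) mfun =
  fo  :: "'o1 \<Rightarrow> 'o2"
  fm  :: "'m1 \<Rightarrow> 'm2"
  mu  :: "'o1 \<Rightarrow> 'o1 \<Rightarrow> 'm2"
  eps :: "'m2"

definition monoidal_functor ::
  "('o1, 'm1) mcat \<Rightarrow> ('o2, 'm2) mcat \<Rightarrow> ('o1, 'm1, 'o2, 'm2) mfun \<Rightarrow> bool" where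
  "monoidal_functor C D F \<longleftrightarrow>
     (\<forall>x\<in>obj C. fo F x \<in> obj D) \<and>
     (\<forall>f\<in>mor C. in_hom D (fm F f) (fo F (src C f)) (fo F (tgt C f))) \<and>
     (\<forall>x\<in>obj C. fm F (idm C x) = idm D (fo F x)) \<and>
     (\<forall>f\<in>mor C. \<forall>g\<in>mor C. src C g = tgt C f \<longrightarrow>
         fm F (cmp C g f) = cmp D (fm F g) (fm F f)) \<and>
     (\<forall>x\<in>obj C. \<forall>y\<in>obj C.
         iso_in D (mu F x y) (otens D (fo F x) (fo F y)) (fo F (otens C x y))) \<and>
     iso_in D (eps F) (unit D) (fo F (unit C)) \<and>
     (\<forall>f\<in>mor C. \<forall>g\<in>mor C.
         cmp D (mu F (tgt C f) (tgt C g)) (mtens D (fm F f) (fm F g))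
       = cmp D (fm F (mtens C f g)) (mu F (src C f) (src C g))) \<and>
     (\<forall>x\<in>obj C. \<forall>y\<in>obj C. \<forall>z\<in>obj C.
         cmp D (mu F (otens C x y) z) (mtens D (mu F x y) (idm D (fo F z)))
       = cmp D (mu F x (otens C y z)) (mtens D (idm D (fo F x)) (mu F y z))) \<and>
     (\<forall>x\<in>obj C. cmp D (mu F (unit C) x) (mtens D (eps F) (idm D (fo F x))) = idm D (fo F x)) \<and>
     (\<forall>x\<in>obj C. cmp D (mu F x (unit C)) (mtens D (idm D (fo F x)) (eps F)) = idm D (fo F x))"

definition monoidal_nat_iso ::
  "('o1, 'm1) mcat \<Rightarrow> ('o2, 'm2) mcat \<Rightarrow> ('o1, 'm1, 'o2, 'm2) mfun
     \<Rightarrow> ('o1, 'm1, 'o2, 'm2) mfun \<Rightarrow> ('o1 \<Rightarrow> 'm2) \<Rightarrow> bool" where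
  "monoidal_nat_iso C D F F' \<theta> \<longleftrightarrow>
     (\<forall>x\<in>obj C. iso_in D (\<theta> x) (fo F x) (fo F' x)) \<and>
     (\<forall>f\<in>mor C. cmp D (\<theta> (tgt C f)) (fm F f) = cmp D (fm F' f) (\<theta> (src C f))) \<and>
     (\<forall>x\<in>obj C. \<forall>y\<in>obj C.
         cmp D (\<theta> (otens C x y)) (mu F x y) = cmp D (mu F' x y) (mtens D (\<theta> x) (\<theta> y))) \<and>
     cmp D (\<theta> (unit C)) (eps F) = eps F'"

definition mf_comp ::
  "('o3, 'm3) mcat \<Rightarrow> ('o2, 'm2, 'o3, 'm3) mfun \<Rightarrow> ('o1, 'm1, 'o2, 'm2) mfun
     \<Rightarrow> ('o1, 'm1, 'o3, 'm3) mfun" where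
  "mf_comp E G F =
     \<lparr> fo = fo G \<circ> fo F,
       fm = fm G \<circ> fm F,
       mu = (\<lambda>x y. cmp E (fm G (mu F x y)) (mu G (fo F x) (fo F y))),
       eps = cmp E (fm G (eps F)) (eps G) \<rparr>"

definition mf_id :: "('o, 'm) mcat \<Rightarrow> ('o, 'm, 'o, 'm) mfun" where
  "mf_id C = \<lparr> fo = id, fm = id, mu = (\<lambda>x y. idm C (otens C x y)), eps = idm C (unit C) \<rparr>"

definition equivalent_2grp :: "('o1, 'm1) mcat \<Rightarrow> ('o2, 'm2) mcat \<Rightarrow> bool" where
  "equivalent_2grp C D \<longleftrightarrow>
     (\<exists>F G \<theta> \<eta>. monoidal_functor C D F \<and> monoidal_functor D C G \<and>
        monoidal_nat_iso C C (mf_comp C G F) (mf_id C) \<theta> \<and>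
        monoidal_nat_iso D D (mf_comp D F G) (mf_id D) \<eta>)"

definition inn :: "('g, 'b) monoid_scheme \<Rightarrow> 'g \<Rightarrow> ('g \<Rightarrow> 'g)" where
  "inn G g = (\<lambda>h\<in>carrier G. g \<otimes>\<^bsub>G\<^esub> h \<otimes>\<^bsub>G\<^esub> inv\<^bsub>G\<^esub> g)"

text \<open>Objects: automorphisms \<phi>; a morphism \<phi> \<rightarrow> c_g \<circ> \<phi> is represented by the pair (g, \<phi>).
  Composition (g', c_g \<phi>) \<circ> (g, \<phi>) = (g' g, \<phi>); tensor = composition of automorphisms,
  (g,\<phi>) \<otimes> (h,\<psi>) = (g \<phi>(h), \<phi>\<psi>) (horizontal composition of natural isomorphisms).\<close>

definition SymG :: "('g, 'b) monoid_scheme \<Rightarrow> ('g \<Rightarrow> 'g, 'g \<times> ('g \<Rightarrow> 'g)) mcat" where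
  "SymG G =
     \<lparr> obj = auto G,
       mor = carrier G \<times> auto G,
       src = snd,
       tgt = (\<lambda>(g, \<phi>). compose (carrier G) (inn G g) \<phi>),
       idm = (\<lambda>\<phi>. (\<one>\<^bsub>G\<^esub>, \<phi>)),
       cmp = (\<lambda>(g', _) (g, \<phi>). (g' \<otimes>\<^bsub>G\<^esub> g, \<phi>)),
       otens = compose (carrier G),
       mtens = (\<lambda>(g, \<phi>) (h, \<psi>). (g \<otimes>\<^bsub>G\<^esub> \<phi> h, compose (carrier G) \<phi> \<psi>)),
       unit = (\<lambda>x\<in>carrier G. x) \<rparr>"

definition left_module :: "('h, 'c) monoid_scheme \<Rightarrow> ('a, 'd) monoid_scheme \<Rightarrow> ('h \<Rightarrow> 'a \<Rightarrow> 'a) \<Rightarrow> bool" where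
  "left_module H A act \<longleftrightarrow> group H \<and> comm_group A \<and> group_hom H (AutoGroup A) act"

definition elem2 :: "('h, 'c) monoid_scheme \<Rightarrow> ('a, 'd) monoid_scheme \<Rightarrow> ('h \<Rightarrow> 'a \<Rightarrow> 'a)
                     \<Rightarrow> ('h, 'a \<times> 'h) mcat" where
  "elem2 H A act =
     \<lparr> obj = carrier H,
       mor = carrier A \<times> carrier H,
       src = snd,
       tgt = snd,
       idm = (\<lambda>h. (\<one>\<^bsub>A\<^esub>, h)),
       cmp = (\<lambda>(a', _) (a, h). (a' \<otimes>\<^bsub>A\<^esub> a, h)),
       otens = (\<lambda>h h'. h \<otimes>\<^bsub>H\<^esub> h'),
       mtens = (\<lambda>(a, h) (a', h'). (a \<otimes>\<^bsub>A\<^esub> act h a', h \<otimes>\<^bsub>H\<^esub> h')),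
       unit = \<one>\<^bsub>H\<^esub> \<rparr>"

end

theory Submission
  imports Defs
begin

text \<open>Suppose Sym(G) were equivalent to a split 2-group A[1] \<rtimes> H[0], via monoidal functors
  F and \<Phi> with \<theta> : \<Phi> F \<cong> id.  In the split 2-group isomorphic objects are equal, so
  h := F \<phi> satisfies h h = 1, because \<phi> \<phi> is inner.  Through the component of \<theta> at \<phi>,
  the automorphism \<psi> := \<Phi> h lies in the class [\<phi>], and the structure isomorphisms
  \<mu>(h,h) : \<psi> \<psi> \<rightarrow> \<Phi> 1 and \<epsilon> : id \<rightarrow> \<Phi> 1, with components m and e in G, give
  \<psi> \<psi> = c(k) for k = m\<inverse> e.  The unit and associativity coherences of \<Phi> at (h, h, h) then
  force \<psi>(k) = k, contradicting hypothesis (2).\<close>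

lemma auto_group_hom: "group G \<Longrightarrow> f \<in> auto G \<Longrightarrow> group_hom G G f"
  by (simp add: auto_def group_hom_def group_hom_axioms_def)

lemma auto_compose:
  "group G \<Longrightarrow> f \<in> auto G \<Longrightarrow> g \<in> auto G \<Longrightarrow> compose (carrier G) f g \<in> auto G"
  by (auto simp add: auto_def Bij_imp_funcset group.hom_compose compose_Bij)

lemma auto_funcset: "f \<in> auto G \<Longrightarrow> f \<in> carrier G \<rightarrow> carrier G"
  by (auto simp: auto_def hom_def)

lemma auto_extensional: "f \<in> auto G \<Longrightarrow> f \<in> extensional (carrier G)"
  by (auto simp: auto_def Bij_def)

lemma otens_SymG: "otens (SymG G) = compose (carrier G)"
  by (simp add: SymG_def)

lemma unit_SymG: "unit (SymG G) = (\<lambda>x\<in>carrier G. x)"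
  by (simp add: SymG_def)

lemma in_hom_SymGE:
  assumes "in_hom (SymG G) f x y"
  obtains g where "f = (g, x)" "g \<in> carrier G" "x \<in> auto G"
    "y = compose (carrier G) (inn G g) x"
  using assms by (cases f) (auto simp: in_hom_def SymG_def)

context group
begin

lemma inn_funcset: "a \<in> carrier G \<Longrightarrow> inn G a \<in> carrier G \<rightarrow> carrier G"
  by (simp add: inn_def)

lemma inn_extensional: "inn G a \<in> extensional (carrier G)"
  by (simp add: inn_def)

lemma inn_one: "inn G \<one> = (\<lambda>x\<in>carrier G. x)"
  by (auto simp: inn_def intro: restrict_ext)

lemma compose_inn_inn:
  assumes "a \<in> carrier G" "b \<in> carrier G"
  shows "compose (carrier G) (inn G a) (inn G b) = inn G (a \<otimes> b)"
  using assms by (auto simp: inn_def compose_def m_assoc inv_mult_group)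

lemma compose_inn_inv_cancel:
  assumes "a \<in> carrier G" "f \<in> carrier G \<rightarrow> carrier G" "f \<in> extensional (carrier G)"
  shows "compose (carrier G) (inn G (inv a)) (compose (carrier G) (inn G a) f) = f"
proof -
  have "compose (carrier G) (inn G (inv a)) (compose (carrier G) (inn G a) f)
      = compose (carrier G) (compose (carrier G) (inn G (inv a)) (inn G a)) f"
    using assms by (simp add: compose_assoc inn_funcset)
  also have "\<dots> = f"
    using assms by (simp add: compose_inn_inn inn_one Id_compose)
  finally show ?thesis .
qed

lemma compose_inn_eq_inn:
  assumes "a \<in> carrier G" "b \<in> carrier G" "f \<in> carrier G \<rightarrow> carrier G" "f \<in> extensional (carrier G)"
    and "compose (carrier G) (inn G a) f = inn G b"
  shows "f = inn G (inv a \<otimes> b)"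
  using compose_inn_inv_cancel[OF assms(1,3,4)] assms(1,2,5) by (simp add: compose_inn_inn)

lemma in_hom_SymG_inn_compose:
  assumes "in_hom (SymG G) f x y"
  obtains t where "t \<in> carrier G" "x = compose (carrier G) (inn G t) y"
proof -
  obtain g where "g \<in> carrier G" "x \<in> auto G" "y = compose (carrier G) (inn G g) x"
    using assms by (rule in_hom_SymGE)
  then show thesis
    using that[of "inv g"] by (simp add: compose_inn_inv_cancel auto_funcset auto_extensional)
qed

lemma inv_mult_fixed_by_hom:
  assumes "group_hom G G \<psi>"
    and carrier: "m \<in> carrier G" "e \<in> carrier G" "u \<in> carrier G" "v \<in> carrier G"
    and "u \<otimes> e = \<one>" "v \<otimes> \<psi> e = \<one>" "u \<otimes> m = v \<otimes> \<psi> m"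
  shows "\<psi> (inv m \<otimes> e) = inv m \<otimes> e"
proof -
  interpret group_hom G G \<psi> by fact
  have "inv e = u" "inv (\<psi> e) = v"
    using assms by (simp_all add: inv_equality)
  with assms have u_m: "inv e \<otimes> m = inv (\<psi> e) \<otimes> \<psi> m"
    by simp
  have "inv m \<otimes> e = inv (inv e \<otimes> m)"
    using carrier by (simp add: inv_mult_group)
  also have "\<dots> = inv (inv (\<psi> e) \<otimes> \<psi> m)"
    by (simp only: u_m)
  also have "\<dots> = \<psi> (inv m \<otimes> e)"
    using carrier by (simp add: inv_mult_group)
  finally show ?thesis ..
qed

end

lemma monoidal_nat_iso_component:
  "monoidal_nat_iso C D F F' \<theta> \<Longrightarrow> x \<in> obj C \<Longrightarrow> iso_in D (\<theta> x) (fo F x) (fo F' x)"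
  unfolding monoidal_nat_iso_def by blast

lemma monoidal_functor_obj_closed:
  "monoidal_functor C D F \<Longrightarrow> x \<in> obj C \<Longrightarrow> fo F x \<in> obj D"
  unfolding monoidal_functor_def by blast

lemma monoidal_functor_mu_iso:
  "monoidal_functor C D F \<Longrightarrow> x \<in> obj C \<Longrightarrow> y \<in> obj C \<Longrightarrow>
    iso_in D (mu F x y) (otens D (fo F x) (fo F y)) (fo F (otens C x y))"
  unfolding monoidal_functor_def by blast

lemma monoidal_functor_eps_iso:
  "monoidal_functor C D F \<Longrightarrow> iso_in D (eps F) (unit D) (fo F (unit C))"
  unfolding monoidal_functor_def by blast

lemma monoidal_functor_assoc:
  "monoidal_functor C D F \<Longrightarrow> x \<in> obj C \<Longrightarrow> y \<in> obj C \<Longrightarrow> z \<in> obj C \<Longrightarrow>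
    cmp D (mu F (otens C x y) z) (mtens D (mu F x y) (idm D (fo F z)))
  = cmp D (mu F x (otens C y z)) (mtens D (idm D (fo F x)) (mu F y z))"
  unfolding monoidal_functor_def by blast

lemma monoidal_functor_left_unit:
  "monoidal_functor C D F \<Longrightarrow> x \<in> obj C \<Longrightarrow>
    cmp D (mu F (unit C) x) (mtens D (eps F) (idm D (fo F x))) = idm D (fo F x)"
  unfolding monoidal_functor_def by blast

lemma monoidal_functor_right_unit:
  "monoidal_functor C D F \<Longrightarrow> x \<in> obj C \<Longrightarrow>
    cmp D (mu F x (unit C)) (mtens D (idm D (fo F x)) (eps F)) = idm D (fo F x)"
  unfolding monoidal_functor_def by blast

lemma in_hom_elem2: "in_hom (elem2 H A act) f x y \<longleftrightarrow> f \<in> mor (elem2 H A act) \<and> x = snd f \<and> y = snd f"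
  by (auto simp: in_hom_def elem2_def)

text \<open>A functor into a split 2-group identifies every pair of isomorphic objects, since the
  split 2-group has no morphisms between distinct objects.\<close>

lemma monoidal_functor_elem2_src_tgt:
  assumes "monoidal_functor C (elem2 H A act) F" "f \<in> mor C"
  shows "fo F (src C f) = fo F (tgt C f)"
  using assms unfolding monoidal_functor_def in_hom_elem2 by auto

lemma monoidal_functor_elem2_otens:
  assumes "monoidal_functor C (elem2 H A act) F" "x \<in> obj C" "y \<in> obj C"
  shows "fo F (otens C x y) = fo F x \<otimes>\<^bsub>H\<^esub> fo F y"
  using monoidal_functor_mu_iso[OF assms] unfolding iso_in_def in_hom_elem2
  by (simp add: elem2_def)

lemma monoidal_functor_elem2_unit:
  assumes "monoidal_functor C (elem2 H A act) F"
  shows "fo F (unit C) = \<one>\<^bsub>H\<^esub>"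
  using monoidal_functor_eps_iso[OF assms] unfolding iso_in_def in_hom_elem2
  by (simp add: elem2_def)

lemma (in group) monoidal_functor_elem2_square_inner:
  assumes F: "monoidal_functor (SymG G) (elem2 H A act) F"
    and "\<phi> \<in> auto G" "g \<in> carrier G" "compose (carrier G) \<phi> \<phi> = inn G g"
  shows "fo F \<phi> \<otimes>\<^bsub>H\<^esub> fo F \<phi> = \<one>\<^bsub>H\<^esub>"
proof -
  have "inn G g \<in> auto G"
    using auto_compose[OF is_group \<open>\<phi> \<in> auto G\<close> \<open>\<phi> \<in> auto G\<close>] assms(4) by simp
  then have "(inv g, inn G g) \<in> mor (SymG G)"
    using \<open>g \<in> carrier G\<close> by (simp add: SymG_def)
  from monoidal_functor_elem2_src_tgt[OF F this]
  have "fo F (inn G g) = \<one>\<^bsub>H\<^esub>"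
    using \<open>g \<in> carrier G\<close>
    by (simp add: SymG_def compose_inn_inn inn_one flip: monoidal_functor_elem2_unit[OF F])
  moreover have "fo F \<phi> \<otimes>\<^bsub>H\<^esub> fo F \<phi> = fo F (compose (carrier G) \<phi> \<phi>)"
    using monoidal_functor_elem2_otens[OF F, of \<phi> \<phi>] \<open>\<phi> \<in> auto G\<close> by (simp add: SymG_def)
  ultimately show ?thesis
    using assms(4) by simp
qed

lemma (in group) monoidal_functor_SymG_self_inverse:
  assumes \<Phi>: "monoidal_functor D (SymG G) \<Phi>"
    and h: "h \<in> obj D" and one: "unit D \<in> obj D" and hh: "otens D h h = unit D"
  obtains k where "k \<in> carrier G" "fo \<Phi> h k = k"
    "compose (carrier G) (fo \<Phi> h) (fo \<Phi> h) = inn G k"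
proof -
  define \<psi> where "\<psi> = fo \<Phi> h"
  have \<psi>: "\<psi> \<in> auto G"
    using monoidal_functor_obj_closed[OF \<Phi> h] by (simp add: \<psi>_def SymG_def)
  have mu: "in_hom (SymG G) (mu \<Phi> x y) (compose (carrier G) (fo \<Phi> x) (fo \<Phi> y)) (fo \<Phi> (otens D x y))"
    if "x \<in> obj D" "y \<in> obj D" for x y
    using monoidal_functor_mu_iso[OF \<Phi> that] by (simp add: iso_in_def otens_SymG)
  obtain m where m: "mu \<Phi> h h = (m, compose (carrier G) \<psi> \<psi>)" "m \<in> carrier G"
      "compose (carrier G) \<psi> \<psi> \<in> auto G"
      "fo \<Phi> (unit D) = compose (carrier G) (inn G m) (compose (carrier G) \<psi> \<psi>)"
    using mu[OF h h] unfolding hh \<psi>_def by (rule in_hom_SymGE)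
  have "in_hom (SymG G) (eps \<Phi>) (\<lambda>x\<in>carrier G. x) (fo \<Phi> (unit D))"
    using monoidal_functor_eps_iso[OF \<Phi>] by (simp add: iso_in_def unit_SymG)
  then obtain e where e: "eps \<Phi> = (e, \<lambda>x\<in>carrier G. x)" "e \<in> carrier G"
      "fo \<Phi> (unit D) = compose (carrier G) (inn G e) (\<lambda>x\<in>carrier G. x)"
    by (rule in_hom_SymGE)
  have unit_inn: "fo \<Phi> (unit D) = inn G e"
    using e(3) compose_Id[OF inn_funcset[OF e(2)] inn_extensional] by simp
  obtain u u' where u: "mu \<Phi> (unit D) h = (u, u')" "u \<in> carrier G"
    using mu[OF one h] by (auto elim: in_hom_SymGE)
  obtain v v' where v: "mu \<Phi> h (unit D) = (v, v')" "v \<in> carrier G"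
    using mu[OF h one] by (auto elim: in_hom_SymGE)
  have \<psi>_closed: "\<psi> e \<in> carrier G" "\<psi> m \<in> carrier G"
    using \<psi> e(2) m(2) by (auto dest: auto_funcset)
  have "compose (carrier G) \<psi> \<psi> \<one> = \<one>"
    using group_hom.hom_one[OF auto_group_hom[OF is_group m(3)]] .
  then have "u \<otimes> e = \<one>" "v \<otimes> \<psi> e = \<one>" "u \<otimes> m = v \<otimes> \<psi> m"
    using monoidal_functor_left_unit[OF \<Phi> h] monoidal_functor_right_unit[OF \<Phi> h]
      monoidal_functor_assoc[OF \<Phi> h h h] e(2) m(2) \<psi>_closed
    by (simp_all add: SymG_def m(1) e(1) u(1) v(1) hh flip: \<psi>_def)
  then have fixed: "\<psi> (inv m \<otimes> e) = inv m \<otimes> e"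
    using inv_mult_fixed_by_hom[OF auto_group_hom[OF is_group \<psi>]] m(2) e(2) u(2) v(2) by blast
  have "compose (carrier G) \<psi> \<psi> = inn G (inv m \<otimes> e)"
    using compose_inn_eq_inn m(2,3) e(2) m(4)[symmetric] unit_inn
    by (simp add: auto_funcset auto_extensional)
  then show thesis
    using that[of "inv m \<otimes> e"] fixed m(2) e(2) unfolding \<psi>_def by simp
qed

theorem corollary4p23:
  fixes G :: "'g monoid" and \<phi> :: "'g \<Rightarrow> 'g"
  assumes "group G"
    and "\<phi> \<in> auto G"
    and nontrivial: "\<not> (\<exists>g\<in>carrier G. \<phi> = inn G g)"
    and square_inner: "\<exists>g\<in>carrier G. compose (carrier G) \<phi> \<phi> = inn G g"
    and no_fixed: "\<And>k g. k \<in> carrier G \<Longrightarrow> g \<in> carrier G \<Longrightarrow>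
        compose (carrier G) (compose (carrier G) (inn G k) \<phi>) (compose (carrier G) (inn G k) \<phi>) = inn G g \<Longrightarrow>
        (compose (carrier G) (inn G k) \<phi>) g \<noteq> g"
  shows "\<not> (\<exists>(H :: 'h monoid) (A :: 'a monoid) act.
              left_module H A act \<and> equivalent_2grp (SymG G) (elem2 H A act))"
proof
  assume "\<exists>(H :: 'h monoid) (A :: 'a monoid) act.
              left_module H A act \<and> equivalent_2grp (SymG G) (elem2 H A act)"
  then obtain H :: "'h monoid" and A :: "'a monoid" and act F \<Phi> \<theta> where
    "group H" and F: "monoidal_functor (SymG G) (elem2 H A act) F"
    and \<Phi>: "monoidal_functor (elem2 H A act) (SymG G) \<Phi>"
    and \<theta>: "monoidal_nat_iso (SymG G) (SymG G) (mf_comp (SymG G) \<Phi> F) (mf_id (SymG G)) \<theta>"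
    unfolding equivalent_2grp_def left_module_def by blast
  interpret group G by fact
  define h where "h = fo F \<phi>"
  obtain g where "g \<in> carrier G" "compose (carrier G) \<phi> \<phi> = inn G g"
    using square_inner by blast
  then have "h \<otimes>\<^bsub>H\<^esub> h = \<one>\<^bsub>H\<^esub>"
    unfolding h_def using monoidal_functor_elem2_square_inner[OF F \<open>\<phi> \<in> auto G\<close>] by blast
  moreover have "h \<in> carrier H" "\<one>\<^bsub>H\<^esub> \<in> carrier H"
    using monoidal_functor_obj_closed[OF F] \<open>\<phi> \<in> auto G\<close> group.is_monoid[OF \<open>group H\<close>]
    by (simp_all add: h_def SymG_def elem2_def monoid.one_closed)
  ultimately obtain k where k: "k \<in> carrier G" "fo \<Phi> h k = k"
      "compose (carrier G) (fo \<Phi> h) (fo \<Phi> h) = inn G k"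
    using monoidal_functor_SymG_self_inverse[OF \<Phi>, of h] by (auto simp: elem2_def)
  have "in_hom (SymG G) (\<theta> \<phi>) (fo \<Phi> h) \<phi>"
    using monoidal_nat_iso_component[OF \<theta>] \<open>\<phi> \<in> auto G\<close>
    by (simp add: iso_in_def SymG_def mf_comp_def mf_id_def h_def)
  then obtain t where "t \<in> carrier G" "fo \<Phi> h = compose (carrier G) (inn G t) \<phi>"
    by (rule in_hom_SymG_inn_compose)
  then show False
    using no_fixed[of t k] k by simp
qed

end
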